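(* Let $A$ and $C$ be abelian groups and let $H$ be a central extension of $A$ by $C$ (written multiplicatively), with commutator pairing $\{a,b\}:=\tilde a\tilde b\tilde a^{-1}\tilde b^{-1}\in C$ for lifts $\tilde a,\tilde b\in H$ of $a,b\in A$. Let $H^{(2)}$ be the Baer square of $H$, and $h\mapsto h^{(2)}$ the canonical homomorphism $H\to H^{(2)}$ lifting $\mathrm{id}_A$ (so $c^{(2)}=c^2$ for $c\in C$). For a symmetric structure $\sigma$ on $H$ define the set-theoretic section $s_\sigma:A\to H^{(2)}$ by $s_\sigma(a):=[\tilde a\,\sigma(\tilde a)]^{-1}\,\tilde a^{(2)}$, where $\tilde a\in H$ is any lift of $a$ and $[\tilde a\,\sigma(\tilde a)]\in C$ (equivalently, $s_\sigma(a)$ is the trivialization of the $C$-torsor $H^{(2)}_a=H_a\cdot H_a$ given by $h\cdot h'\mapsto h\sigma(h')=\sigma(h)h'\in C$). Then $\sigma\mapsto s_\sigma$ is a bijection between the set of symmetric structures on $H$ and the set of set-theoretic sections $s:A\to H^{(2)}$ of the projection $H^{(2)}\to A$ satisfying $s(a)s(b)=s(ab)\{a,b\}$ for all $a,b\in A$.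
   Context: A symmetric structure on the central $C$-extension $H$ of $A$ is an automorphism $\sigma$ of the group $H$ such that $\sigma^2=\mathrm{id}_H$, $\sigma|_C=\mathrm{id}_C$, and $\sigma$ induces on $A=H/C$ the involution $a\mapsto a^{-1}$. For $a\in A$, $H_a\subset H$ denotes the preimage of $a$ (a $C$-torsor). The Baer square $H^{(2)}$ is the quotient of $H\times_A H$ by the subgroup $\{(c,c^{-1}):c\in C\}$; it is a central $C$-extension of $A$ with $C$ embedded via $c\mapsto (c,1)$, and $h^{(2)}$ is the class of $(h,h)$. *)

theory Defs
  imports "HOL-Algebra.Algebra"
begin

definition central_ext ::
  "('a, 'x) monoid_scheme \<Rightarrow> ('c, 'y) monoid_scheme \<Rightarrow> ('h, 'z) monoid_scheme
   \<Rightarrow> ('c \<Rightarrow> 'h) \<Rightarrow> ('h \<Rightarrow> 'a) \<Rightarrow> bool" where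
  "central_ext A C H i p \<longleftrightarrow>
     comm_group A \<and> comm_group C \<and> group H \<and>
     i \<in> hom C H \<and> inj_on i (carrier C) \<and>
     p \<in> hom H A \<and> p ` carrier H = carrier A \<and>
     kernel H A p = i ` carrier C \<and>
     (\<forall>c\<in>carrier C. \<forall>h\<in>carrier H. i c \<otimes>\<^bsub>H\<^esub> h = h \<otimes>\<^bsub>H\<^esub> i c)"

definition fib_prod :: "('h, 'z) monoid_scheme \<Rightarrow> ('h \<Rightarrow> 'a) \<Rightarrow> ('h \<times> 'h) monoid" where
  "fib_prod H p = (H \<times>\<times> H)\<lparr>carrier :=
      {(h, h'). h \<in> carrier H \<and> h' \<in> carrier H \<and> p h = p h'}\<rparr>"

definition baer_N :: "('c, 'y) monoid_scheme \<Rightarrow> ('h, 'z) monoid_scheme \<Rightarrow> ('c \<Rightarrow> 'h)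
   \<Rightarrow> ('h \<times> 'h) set" where
  "baer_N C H i = (\<lambda>c. (i c, inv\<^bsub>H\<^esub> (i c))) ` carrier C"

definition baer_sq :: "('c, 'y) monoid_scheme \<Rightarrow> ('h, 'z) monoid_scheme \<Rightarrow> ('c \<Rightarrow> 'h)
   \<Rightarrow> ('h \<Rightarrow> 'a) \<Rightarrow> ('h \<times> 'h) set monoid" where
  "baer_sq C H i p = fib_prod H p Mod baer_N C H i"

definition baer_cls :: "('c, 'y) monoid_scheme \<Rightarrow> ('h, 'z) monoid_scheme \<Rightarrow> ('c \<Rightarrow> 'h)
   \<Rightarrow> ('h \<Rightarrow> 'a) \<Rightarrow> 'h \<Rightarrow> 'h \<Rightarrow> ('h \<times> 'h) set" where
  "baer_cls C H i p h h' = baer_N C H i #>\<^bsub>fib_prod H p\<^esub> (h, h')"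

definition baer_map where
  "baer_map C H i p h = baer_cls C H i p h h"

definition baer_emb where
  "baer_emb C H i p c = baer_cls C H i p (i c) \<one>\<^bsub>H\<^esub>"

definition baer_proj :: "('h \<Rightarrow> 'a) \<Rightarrow> ('h \<times> 'h) set \<Rightarrow> 'a" where
  "baer_proj p S = p (fst (SOME z. z \<in> S))"

definition lift :: "('h, 'z) monoid_scheme \<Rightarrow> ('h \<Rightarrow> 'a) \<Rightarrow> 'a \<Rightarrow> 'h" where
  "lift H p a = (SOME h. h \<in> carrier H \<and> p h = a)"

definition cpre :: "('c, 'y) monoid_scheme \<Rightarrow> ('c \<Rightarrow> 'h) \<Rightarrow> 'h \<Rightarrow> 'c" where
  "cpre C i h = (THE c. c \<in> carrier C \<and> i c = h)"

definition comm_pair where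
  "comm_pair C H i p a b =
     cpre C i (lift H p a \<otimes>\<^bsub>H\<^esub> lift H p b \<otimes>\<^bsub>H\<^esub>
               inv\<^bsub>H\<^esub> (lift H p a) \<otimes>\<^bsub>H\<^esub> inv\<^bsub>H\<^esub> (lift H p b))"

definition sym_struct ::
  "('a, 'x) monoid_scheme \<Rightarrow> ('c, 'y) monoid_scheme \<Rightarrow> ('h, 'z) monoid_scheme
   \<Rightarrow> ('c \<Rightarrow> 'h) \<Rightarrow> ('h \<Rightarrow> 'a) \<Rightarrow> ('h \<Rightarrow> 'h) \<Rightarrow> bool" where
  "sym_struct A C H i p \<sigma> \<longleftrightarrow>
     \<sigma> \<in> hom H H \<and> bij_betw \<sigma> (carrier H) (carrier H) \<and> \<sigma> \<in> extensional (carrier H) \<and>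
     (\<forall>h\<in>carrier H. \<sigma> (\<sigma> h) = h) \<and>
     (\<forall>c\<in>carrier C. \<sigma> (i c) = i c) \<and>
     (\<forall>h\<in>carrier H. p (\<sigma> h) = inv\<^bsub>A\<^esub> (p h))"

definition sec_of_sym where
  "sec_of_sym A C H i p \<sigma> =
     (\<lambda>a\<in>carrier A.
        baer_emb C H i p (inv\<^bsub>C\<^esub> (cpre C i (lift H p a \<otimes>\<^bsub>H\<^esub> \<sigma> (lift H p a))))
        \<otimes>\<^bsub>baer_sq C H i p\<^esub> baer_map C H i p (lift H p a))"

definition good_section where
  "good_section A C H i p s \<longleftrightarrow>
     s \<in> extensional (carrier A) \<and>
     (\<forall>a\<in>carrier A. s a \<in> carrier (baer_sq C H i p) \<and> baer_proj p (s a) = a) \<and>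
     (\<forall>a\<in>carrier A. \<forall>b\<in>carrier A.
        s a \<otimes>\<^bsub>baer_sq C H i p\<^esub> s b =
        s (a \<otimes>\<^bsub>A\<^esub> b) \<otimes>\<^bsub>baer_sq C H i p\<^esub> baer_emb C H i p (comm_pair C H i p a b))"

end

theory Submission
  imports Defs
begin

text \<open>
  The class of a pair (u, h) in H^(2) determines u once h is fixed, and s_sigma(p h) is the
  class of (sigma(h)^-1, h); so sigma is recovered from s_sigma. Conversely, a section s assigns
  to every h the unique partner tau(h) with s(p h) = [tau(h), h]. Multiplying two such classes
  gives [tau(h) tau(k), h k], and tau(h) tau(k) differs from tau(k) tau(h) by the commutator
  pairing {p h, p k}; hence the relation s(a) s(b) = s(a b) {a, b} says exactly that tau reverses
  products. Since [u, h] = [h, u] on a fibre, tau is an involution, and h \<mapsto> tau(h)^-1 is the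
  symmetric structure whose section is s.
\<close>

lemma (in group) commutator_mult_swap:
  assumes "x \<in> carrier G" "y \<in> carrier G"
  shows "(x \<otimes> y \<otimes> inv x \<otimes> inv y) \<otimes> (y \<otimes> x) = x \<otimes> y"
proof -
  have "inv y \<otimes> (y \<otimes> x) = x" using assms by (simp add: m_assoc[symmetric])
  then show ?thesis using assms by (simp add: m_assoc)
qed

definition sec_partner ::
  "('c, 'y) monoid_scheme \<Rightarrow> ('h, 'z) monoid_scheme \<Rightarrow> ('c \<Rightarrow> 'h) \<Rightarrow> ('h \<Rightarrow> 'a)
   \<Rightarrow> ('a \<Rightarrow> ('h \<times> 'h) set) \<Rightarrow> 'h \<Rightarrow> 'h" where
  "sec_partner C H i p s h = (THE u. u \<in> carrier H \<and> p u = p h \<and> s (p h) = baer_cls C H i p u h)"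

definition sym_of_sec ::
  "('c, 'y) monoid_scheme \<Rightarrow> ('h, 'z) monoid_scheme \<Rightarrow> ('c \<Rightarrow> 'h) \<Rightarrow> ('h \<Rightarrow> 'a)
   \<Rightarrow> ('a \<Rightarrow> ('h \<times> 'h) set) \<Rightarrow> 'h \<Rightarrow> 'h" where
  "sym_of_sec C H i p s = (\<lambda>h\<in>carrier H. inv\<^bsub>H\<^esub> (sec_partner C H i p s h))"

locale central_extension =
  fixes A :: "('a, 'x) monoid_scheme" and C :: "('c, 'y) monoid_scheme"
    and H :: "('h, 'z) monoid_scheme" and i :: "'c \<Rightarrow> 'h" and p :: "'h \<Rightarrow> 'a"
  assumes central_ext: "central_ext A C H i p"
begin

sublocale A: comm_group A using central_ext unfolding central_ext_def by auto
sublocale C: comm_group C using central_ext unfolding central_ext_def by auto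
sublocale H: group H using central_ext unfolding central_ext_def by auto
sublocale i: group_hom C H i
  using central_ext unfolding central_ext_def group_hom_def group_hom_axioms_def by auto
sublocale p: group_hom H A p
  using central_ext unfolding central_ext_def group_hom_def group_hom_axioms_def by auto

lemma central: "c \<in> carrier C \<Longrightarrow> h \<in> carrier H \<Longrightarrow> i c \<otimes>\<^bsub>H\<^esub> h = h \<otimes>\<^bsub>H\<^esub> i c"
  using central_ext unfolding central_ext_def by auto

lemma central_inv:
  "c \<in> carrier C \<Longrightarrow> h \<in> carrier H \<Longrightarrow> inv\<^bsub>H\<^esub> (i c) \<otimes>\<^bsub>H\<^esub> h = h \<otimes>\<^bsub>H\<^esub> inv\<^bsub>H\<^esub> (i c)"
  using central[of "inv\<^bsub>C\<^esub> c" h] by simp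

lemma central_mult_central:
  assumes "c \<in> carrier C" "d \<in> carrier C" "x \<in> carrier H" "y \<in> carrier H"
  shows "(i c \<otimes>\<^bsub>H\<^esub> x) \<otimes>\<^bsub>H\<^esub> (i d \<otimes>\<^bsub>H\<^esub> y) = x \<otimes>\<^bsub>H\<^esub> y \<otimes>\<^bsub>H\<^esub> i (c \<otimes>\<^bsub>C\<^esub> d)"
proof -
  have "(i c \<otimes>\<^bsub>H\<^esub> x) \<otimes>\<^bsub>H\<^esub> (i d \<otimes>\<^bsub>H\<^esub> y) = (x \<otimes>\<^bsub>H\<^esub> i c) \<otimes>\<^bsub>H\<^esub> (y \<otimes>\<^bsub>H\<^esub> i d)"
    using assms central by simp
  also have "\<dots> = x \<otimes>\<^bsub>H\<^esub> ((i c \<otimes>\<^bsub>H\<^esub> y) \<otimes>\<^bsub>H\<^esub> i d)"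
    using assms by (simp add: H.m_assoc)
  also have "\<dots> = x \<otimes>\<^bsub>H\<^esub> ((y \<otimes>\<^bsub>H\<^esub> i c) \<otimes>\<^bsub>H\<^esub> i d)"
    using assms central by simp
  also have "\<dots> = x \<otimes>\<^bsub>H\<^esub> y \<otimes>\<^bsub>H\<^esub> (i c \<otimes>\<^bsub>H\<^esub> i d)"
    using assms by (simp add: H.m_assoc)
  finally show ?thesis using assms by simp
qed

lemma p_i: "c \<in> carrier C \<Longrightarrow> p (i c) = \<one>\<^bsub>A\<^esub>"
  using central_ext unfolding central_ext_def kernel_def by auto

lemma p_eq_oneE:
  assumes "h \<in> carrier H" "p h = \<one>\<^bsub>A\<^esub>"
  obtains c where "c \<in> carrier C" "h = i c"
proof -
  have "h \<in> kernel H A p" using assms by (simp add: kernel_def)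
  then show ?thesis using central_ext that unfolding central_ext_def by auto
qed

lemma same_fibreE:
  assumes "x \<in> carrier H" "y \<in> carrier H" "p x = p y"
  obtains c where "c \<in> carrier C" "y = i c \<otimes>\<^bsub>H\<^esub> x"
proof -
  obtain c where c: "c \<in> carrier C" "y \<otimes>\<^bsub>H\<^esub> inv\<^bsub>H\<^esub> x = i c"
  proof (rule p_eq_oneE)
    show "p (y \<otimes>\<^bsub>H\<^esub> inv\<^bsub>H\<^esub> x) = \<one>\<^bsub>A\<^esub>" using assms by simp
  qed (use assms in auto)
  then have "y = i c \<otimes>\<^bsub>H\<^esub> x" using assms by (metis H.inv_solve_right i.hom_closed)
  with c(1) show ?thesis by (rule that)
qed

lemma cpre_i: "c \<in> carrier C \<Longrightarrow> cpre C i (i c) = c"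
  using central_ext unfolding cpre_def central_ext_def
  by (auto intro!: the_equality dest: inj_onD)

lemma lift_closed: "a \<in> carrier A \<Longrightarrow> lift H p a \<in> carrier H"
  and p_lift: "a \<in> carrier A \<Longrightarrow> p (lift H p a) = a"
proof -
  assume "a \<in> carrier A"
  then have "a \<in> p ` carrier H" using central_ext unfolding central_ext_def by simp
  then have "\<exists>h. h \<in> carrier H \<and> p h = a" by blast
  then show "lift H p a \<in> carrier H" "p (lift H p a) = a"
    unfolding lift_def by (metis (mono_tags, lifting) someI_ex)+
qed

lemma commutator_centralE:
  assumes "x \<in> carrier H" "y \<in> carrier H"
  obtains e where "e \<in> carrier C" "i e = x \<otimes>\<^bsub>H\<^esub> y \<otimes>\<^bsub>H\<^esub> inv\<^bsub>H\<^esub> x \<otimes>\<^bsub>H\<^esub> inv\<^bsub>H\<^esub> y"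
proof (rule p_eq_oneE)
  have "p (x \<otimes>\<^bsub>H\<^esub> y \<otimes>\<^bsub>H\<^esub> inv\<^bsub>H\<^esub> x \<otimes>\<^bsub>H\<^esub> inv\<^bsub>H\<^esub> y)
     = p y \<otimes>\<^bsub>A\<^esub> p x \<otimes>\<^bsub>A\<^esub> inv\<^bsub>A\<^esub> p x \<otimes>\<^bsub>A\<^esub> inv\<^bsub>A\<^esub> p y"
    using assms by (simp add: A.m_comm[of "p x" "p y"])
  also have "\<dots> = \<one>\<^bsub>A\<^esub>" using assms by (simp add: A.m_assoc)
  finally show "p (x \<otimes>\<^bsub>H\<^esub> y \<otimes>\<^bsub>H\<^esub> inv\<^bsub>H\<^esub> x \<otimes>\<^bsub>H\<^esub> inv\<^bsub>H\<^esub> y) = \<one>\<^bsub>A\<^esub>" .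
qed (use assms that in auto)

lemma comm_pair_closed_mult_swap:
  assumes x: "x \<in> carrier H" and y: "y \<in> carrier H"
  shows "comm_pair C H i p (p x) (p y) \<in> carrier C"
    and "i (comm_pair C H i p (p x) (p y)) \<otimes>\<^bsub>H\<^esub> (y \<otimes>\<^bsub>H\<^esub> x) = x \<otimes>\<^bsub>H\<^esub> y"
proof -
  define lx ly where "lx = lift H p (p x)" and "ly = lift H p (p y)"
  have lx: "lx \<in> carrier H" "p lx = p x" and ly: "ly \<in> carrier H" "p ly = p y"
    using lift_closed p_lift x y unfolding lx_def ly_def by auto
  obtain c where c: "c \<in> carrier C" "lx = i c \<otimes>\<^bsub>H\<^esub> x"
    using same_fibreE[OF x lx(1)] lx(2) by auto
  obtain d where d: "d \<in> carrier C" "ly = i d \<otimes>\<^bsub>H\<^esub> y"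
    using same_fibreE[OF y ly(1)] ly(2) by auto
  obtain e where e: "e \<in> carrier C" "i e = lx \<otimes>\<^bsub>H\<^esub> ly \<otimes>\<^bsub>H\<^esub> inv\<^bsub>H\<^esub> lx \<otimes>\<^bsub>H\<^esub> inv\<^bsub>H\<^esub> ly"
    using commutator_centralE[OF lx(1) ly(1)] .
  have pair: "comm_pair C H i p (p x) (p y) = e"
    unfolding comm_pair_def lx_def[symmetric] ly_def[symmetric] e(2)[symmetric]
    using e(1) by (rule cpre_i)
  then show "comm_pair C H i p (p x) (p y) \<in> carrier C" using e(1) by simp
  \<comment> \<open>The commutator of the chosen lifts is that of x and y: they differ by central factors.\<close>
  have "i e \<otimes>\<^bsub>H\<^esub> (ly \<otimes>\<^bsub>H\<^esub> lx) = lx \<otimes>\<^bsub>H\<^esub> ly"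
    unfolding e(2) using lx(1) ly(1) by (rule H.commutator_mult_swap)
  moreover have "lx \<otimes>\<^bsub>H\<^esub> ly = x \<otimes>\<^bsub>H\<^esub> y \<otimes>\<^bsub>H\<^esub> i (c \<otimes>\<^bsub>C\<^esub> d)"
    using c d x y central_mult_central by simp
  moreover have "ly \<otimes>\<^bsub>H\<^esub> lx = y \<otimes>\<^bsub>H\<^esub> x \<otimes>\<^bsub>H\<^esub> i (c \<otimes>\<^bsub>C\<^esub> d)"
    using c d x y central_mult_central[of d c y x] C.m_comm[of c d] by simp
  ultimately have
    "(i e \<otimes>\<^bsub>H\<^esub> (y \<otimes>\<^bsub>H\<^esub> x)) \<otimes>\<^bsub>H\<^esub> i (c \<otimes>\<^bsub>C\<^esub> d) = (x \<otimes>\<^bsub>H\<^esub> y) \<otimes>\<^bsub>H\<^esub> i (c \<otimes>\<^bsub>C\<^esub> d)"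
    using e c d x y by (simp add: H.m_assoc)
  then show "i (comm_pair C H i p (p x) (p y)) \<otimes>\<^bsub>H\<^esub> (y \<otimes>\<^bsub>H\<^esub> x) = x \<otimes>\<^bsub>H\<^esub> y"
    using pair e c d x y by (simp del: i.hom_mult)
qed

abbreviation "F \<equiv> fib_prod H p"
abbreviation "N \<equiv> baer_N C H i"
abbreviation "B \<equiv> baer_sq C H i p"
abbreviation "cls \<equiv> baer_cls C H i p"

lemma F_carrier [simp]: "carrier F = {(h, h'). h \<in> carrier H \<and> h' \<in> carrier H \<and> p h = p h'}"
  and F_mult [simp]: "(x, y) \<otimes>\<^bsub>F\<^esub> (x', y') = (x \<otimes>\<^bsub>H\<^esub> x', y \<otimes>\<^bsub>H\<^esub> y')"
  and F_one [simp]: "\<one>\<^bsub>F\<^esub> = (\<one>\<^bsub>H\<^esub>, \<one>\<^bsub>H\<^esub>)"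
  by (simp_all add: fib_prod_def DirProd_def)

lemma fib_prod_subgroup:
  "subgroup {(h, h'). h \<in> carrier H \<and> h' \<in> carrier H \<and> p h = p h'} (H \<times>\<times> H)"
proof -
  interpret HH: group "H \<times>\<times> H" by (rule DirProd_group) (rule H.is_group)+
  show ?thesis
  proof (rule HH.subgroupI)
    fix a assume "a \<in> {(h, h'). h \<in> carrier H \<and> h' \<in> carrier H \<and> p h = p h'}"
    then show "inv\<^bsub>H \<times>\<times> H\<^esub> a \<in> {(h, h'). h \<in> carrier H \<and> h' \<in> carrier H \<and> p h = p h'}"
      by (auto simp: inv_DirProd[OF H.is_group H.is_group])
  qed (auto simp: DirProd_def)
qed

sublocale F: group F
  unfolding fib_prod_def
  by (rule subgroup.subgroup_is_group[OF fib_prod_subgroup DirProd_group]) (rule H.is_group)+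

lemma N_eq: "N = (\<lambda>c. (i c, inv\<^bsub>H\<^esub> (i c))) ` carrier C"
  by (simp add: baer_N_def)

lemma baer_N_subgroup: "subgroup N F"
proof (rule F.subgroupI)
  show "N \<subseteq> carrier F" "N \<noteq> {}" by (auto simp: N_eq p_i)
next
  fix a assume "a \<in> N"
  then obtain c where c: "c \<in> carrier C" "a = (i c, inv\<^bsub>H\<^esub> (i c))" by (auto simp: N_eq)
  then have "inv\<^bsub>F\<^esub> a = (i (inv\<^bsub>C\<^esub> c), inv\<^bsub>H\<^esub> (i (inv\<^bsub>C\<^esub> c)))"
    by (intro F.inv_equality) (auto simp: p_i)
  then show "inv\<^bsub>F\<^esub> a \<in> N" using c unfolding N_eq
    by (intro image_eqI[where x="inv\<^bsub>C\<^esub> c"]) auto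
next
  fix a b assume "a \<in> N" "b \<in> N"
  then obtain c d where c: "c \<in> carrier C" "a = (i c, inv\<^bsub>H\<^esub> (i c))"
    and d: "d \<in> carrier C" "b = (i d, inv\<^bsub>H\<^esub> (i d))" by (auto simp: N_eq)
  then have "a \<otimes>\<^bsub>F\<^esub> b = (i (c \<otimes>\<^bsub>C\<^esub> d), inv\<^bsub>H\<^esub> (i (c \<otimes>\<^bsub>C\<^esub> d)))"
    using central_inv[of c "inv\<^bsub>H\<^esub> (i d)"] by (simp add: H.inv_mult_group)
  then show "a \<otimes>\<^bsub>F\<^esub> b \<in> N" using c d unfolding N_eq
    by (intro image_eqI[where x="c \<otimes>\<^bsub>C\<^esub> d"]) auto
qed

sublocale N: normal N F
proof (rule F.normal_invI[OF baer_N_subgroup])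
  fix x n assume x: "x \<in> carrier F" and n: "n \<in> N"
  obtain c where c: "c \<in> carrier C" "n = (i c, inv\<^bsub>H\<^esub> (i c))" using n by (auto simp: N_eq)
  obtain u v where uv: "x = (u, v)" "u \<in> carrier H" "v \<in> carrier H" using x by auto
  have "x \<otimes>\<^bsub>F\<^esub> n = n \<otimes>\<^bsub>F\<^esub> x"
    using uv c central[of c u] central_inv[of c v] by simp
  then have "x \<otimes>\<^bsub>F\<^esub> n \<otimes>\<^bsub>F\<^esub> inv\<^bsub>F\<^esub> x = n"
    using x n baer_N_subgroup by (metis F.inv_solve_right F.m_closed F.inv_closed subgroup.mem_carrier)
  then show "x \<otimes>\<^bsub>F\<^esub> n \<otimes>\<^bsub>F\<^esub> inv\<^bsub>F\<^esub> x \<in> N" using n by simp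
qed

sublocale B: group B
  unfolding baer_sq_def by (rule N.factorgroup_is_group)

lemma cls_eq_rcos: "cls x y = N #>\<^bsub>F\<^esub> (x, y)"
  by (simp add: baer_cls_def)

lemma cls_central_shift:
  assumes "x \<in> carrier H" "y \<in> carrier H" "p x = p y" "c \<in> carrier C"
  shows "cls (i c \<otimes>\<^bsub>H\<^esub> x) (inv\<^bsub>H\<^esub> (i c) \<otimes>\<^bsub>H\<^esub> y) = cls x y"
proof -
  have "(i c \<otimes>\<^bsub>H\<^esub> x, inv\<^bsub>H\<^esub> (i c) \<otimes>\<^bsub>H\<^esub> y) = (i c, inv\<^bsub>H\<^esub> (i c)) \<otimes>\<^bsub>F\<^esub> (x, y)"
    by simp
  also have "\<dots> \<in> N #>\<^bsub>F\<^esub> (x, y)"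
    using assms by (intro F.rcosI N.subset) (auto simp: N_eq)
  finally show ?thesis
    unfolding cls_eq_rcos using assms by (intro F.repr_independence[symmetric] N.subgroup_axioms) auto
qed

lemma cls_left_inj:
  assumes "x \<in> carrier H" "x' \<in> carrier H" "h \<in> carrier H" "p x = p h" "p x' = p h"
    and "cls x h = cls x' h"
  shows "x = x'"
proof -
  have "(x, h) \<in> N #>\<^bsub>F\<^esub> (x, h)" using assms by (intro F.rcos_self N.subgroup_axioms) auto
  then have "(x, h) \<in> N #>\<^bsub>F\<^esub> (x', h)" using assms(6) by (simp add: cls_eq_rcos)
  then obtain c where c: "c \<in> carrier C" "(x, h) = (i c, inv\<^bsub>H\<^esub> (i c)) \<otimes>\<^bsub>F\<^esub> (x', h)"
    unfolding r_coset_def N_eq by auto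
  then have "inv\<^bsub>H\<^esub> (i c) \<otimes>\<^bsub>H\<^esub> h = h" "x = i c \<otimes>\<^bsub>H\<^esub> x'" by auto
  then show ?thesis using c assms by (simp add: H.inv_eq_1_iff)
qed

lemma cls_mult:
  assumes "x \<in> carrier H" "y \<in> carrier H" "p x = p y"
    "x' \<in> carrier H" "y' \<in> carrier H" "p x' = p y'"
  shows "cls x y \<otimes>\<^bsub>B\<^esub> cls x' y' = cls (x \<otimes>\<^bsub>H\<^esub> x') (y \<otimes>\<^bsub>H\<^esub> y')"
  unfolding baer_sq_def cls_eq_rcos FactGroup_def using assms by (simp add: N.rcos_sum)

lemma cls_closed:
  assumes "x \<in> carrier H" "y \<in> carrier H" "p x = p y"
  shows "cls x y \<in> carrier B"
  unfolding baer_sq_def cls_eq_rcos FactGroup_def using assms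
  by (simp, intro F.rcosetsI N.subset) auto

lemma baer_sq_carrierE:
  assumes "S \<in> carrier B"
  obtains x y where "x \<in> carrier H" "y \<in> carrier H" "p x = p y" "S = cls x y"
  using assms unfolding baer_sq_def cls_eq_rcos FactGroup_def RCOSETS_def by auto

lemma baer_proj_cls:
  assumes "x \<in> carrier H" "y \<in> carrier H" "p x = p y"
  shows "baer_proj p (cls x y) = p x"
  unfolding baer_proj_def cls_eq_rcos
proof (rule someI2)
  show "(x, y) \<in> N #>\<^bsub>F\<^esub> (x, y)" using assms by (intro F.rcos_self N.subgroup_axioms) auto
next
  fix z assume "z \<in> N #>\<^bsub>F\<^esub> (x, y)"
  then obtain c where "c \<in> carrier C" "z = (i c \<otimes>\<^bsub>H\<^esub> x, inv\<^bsub>H\<^esub> (i c) \<otimes>\<^bsub>H\<^esub> y)"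
    unfolding r_coset_def N_eq by auto
  then show "p (fst z) = p x" using assms by (simp add: p_i)
qed

lemma cls_swap:
  assumes "x \<in> carrier H" "y \<in> carrier H" "p x = p y"
  shows "cls x y = cls y x"
proof -
  obtain c where c: "c \<in> carrier C" "y = i c \<otimes>\<^bsub>H\<^esub> x" using same_fibreE assms by blast
  have "inv\<^bsub>H\<^esub> (i c) \<otimes>\<^bsub>H\<^esub> y = x" using c assms by (simp add: H.m_assoc[symmetric])
  then have "cls y x = cls (i c \<otimes>\<^bsub>H\<^esub> x) (inv\<^bsub>H\<^esub> (i c) \<otimes>\<^bsub>H\<^esub> y)" using c(2) by simp
  also have "\<dots> = cls x y" using assms c(1) by (rule cls_central_shift)
  finally show ?thesis by simp
qed

lemma baer_emb_mult_baer_map: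
  assumes "c \<in> carrier C" "h \<in> carrier H"
  shows "baer_emb C H i p c \<otimes>\<^bsub>B\<^esub> baer_map C H i p h = cls (i c \<otimes>\<^bsub>H\<^esub> h) h"
  unfolding baer_emb_def baer_map_def using assms by (subst cls_mult) (auto simp: p_i)

lemma baer_sq_fibre_repr:
  assumes S: "S \<in> carrier B" and h: "h \<in> carrier H" and proj: "baer_proj p S = p h"
  shows "\<exists>!u. u \<in> carrier H \<and> p u = p h \<and> S = cls u h"
proof -
  obtain x y where xy: "x \<in> carrier H" "y \<in> carrier H" "p x = p y" "S = cls x y"
    using S by (rule baer_sq_carrierE)
  have "p x = p h" using proj xy baer_proj_cls by simp
  then obtain c where c: "c \<in> carrier C" "y = i c \<otimes>\<^bsub>H\<^esub> h"
    using same_fibreE[of h y] xy h by auto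
  define u where "u = i c \<otimes>\<^bsub>H\<^esub> x"
  have u: "u \<in> carrier H" "p u = p h" using c xy \<open>p x = p h\<close> by (auto simp: u_def p_i)
  have "i (inv\<^bsub>C\<^esub> c) \<otimes>\<^bsub>H\<^esub> u = x" using c xy by (simp add: u_def H.m_assoc[symmetric])
  moreover have "inv\<^bsub>H\<^esub> (i (inv\<^bsub>C\<^esub> c)) \<otimes>\<^bsub>H\<^esub> h = y" using c h by simp
  ultimately have "S = cls (i (inv\<^bsub>C\<^esub> c) \<otimes>\<^bsub>H\<^esub> u) (inv\<^bsub>H\<^esub> (i (inv\<^bsub>C\<^esub> c)) \<otimes>\<^bsub>H\<^esub> h)"
    using xy(4) by simp
  also have "\<dots> = cls u h" using u h c by (intro cls_central_shift) auto
  finally have "S = cls u h" .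
  then show ?thesis using u h by (intro ex1I[of _ u]) (auto intro: cls_left_inj)
qed

end

locale symmetric_structure = central_extension A C H i p
  for A :: "('a, 'x) monoid_scheme" and C :: "('c, 'y) monoid_scheme"
    and H :: "('h, 'z) monoid_scheme" and i :: "'c \<Rightarrow> 'h" and p :: "'h \<Rightarrow> 'a" +
  fixes \<sigma> :: "'h \<Rightarrow> 'h"
  assumes sym_struct: "sym_struct A C H i p \<sigma>"
begin

sublocale \<sigma>: group_hom H H \<sigma>
  using sym_struct unfolding sym_struct_def group_hom_def group_hom_axioms_def
  by (auto intro: H.is_group)

lemma sigma_i: "c \<in> carrier C \<Longrightarrow> \<sigma> (i c) = i c"
  and p_sigma: "h \<in> carrier H \<Longrightarrow> p (\<sigma> h) = inv\<^bsub>A\<^esub> (p h)"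
  and sigma_extensional: "\<sigma> \<in> extensional (carrier H)"
  using sym_struct unfolding sym_struct_def by auto

lemma cls_inv_sigma_same_fibre:
  assumes h: "h \<in> carrier H" and h': "h' \<in> carrier H" and fibre: "p h = p h'"
  shows "cls (inv\<^bsub>H\<^esub> (\<sigma> h')) h' = cls (inv\<^bsub>H\<^esub> (\<sigma> h)) h"
proof -
  obtain c where c: "c \<in> carrier C" "h' = i c \<otimes>\<^bsub>H\<^esub> h"
    using same_fibreE[OF h h' fibre] by blast
  have "inv\<^bsub>H\<^esub> (\<sigma> h') = i (inv\<^bsub>C\<^esub> c) \<otimes>\<^bsub>H\<^esub> inv\<^bsub>H\<^esub> (\<sigma> h)"
    using c h central_inv[of c "inv\<^bsub>H\<^esub> (\<sigma> h)"] by (simp add: sigma_i H.inv_mult_group)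
  then have "cls (inv\<^bsub>H\<^esub> (\<sigma> h')) h' =
      cls (i (inv\<^bsub>C\<^esub> c) \<otimes>\<^bsub>H\<^esub> inv\<^bsub>H\<^esub> (\<sigma> h)) (inv\<^bsub>H\<^esub> (i (inv\<^bsub>C\<^esub> c)) \<otimes>\<^bsub>H\<^esub> h)"
    using c by simp
  also have "\<dots> = cls (inv\<^bsub>H\<^esub> (\<sigma> h)) h"
    using c h by (intro cls_central_shift) (auto simp: p_sigma)
  finally show ?thesis .
qed

lemma sec_of_sym_apply:
  assumes h: "h \<in> carrier H"
  shows "sec_of_sym A C H i p \<sigma> (p h) = cls (inv\<^bsub>H\<^esub> (\<sigma> h)) h"
proof -
  define l where "l = lift H p (p h)"
  have l: "l \<in> carrier H" "p l = p h" using lift_closed p_lift h unfolding l_def by auto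
  have "p (l \<otimes>\<^bsub>H\<^esub> \<sigma> l) = \<one>\<^bsub>A\<^esub>" using l h by (simp add: p_sigma)
  then obtain k where k: "k \<in> carrier C" "l \<otimes>\<^bsub>H\<^esub> \<sigma> l = i k"
    using p_eq_oneE l by (metis H.m_closed \<sigma>.hom_closed)
  have "i (inv\<^bsub>C\<^esub> k) \<otimes>\<^bsub>H\<^esub> l = inv\<^bsub>H\<^esub> (\<sigma> l)"
    using k l by (simp flip: k(2) add: H.inv_mult_group H.m_assoc)
  moreover have "sec_of_sym A C H i p \<sigma> (p h) =
      baer_emb C H i p (inv\<^bsub>C\<^esub> k) \<otimes>\<^bsub>B\<^esub> baer_map C H i p l"
    using h k cpre_i by (simp add: sec_of_sym_def flip: l_def)
  ultimately have "sec_of_sym A C H i p \<sigma> (p h) = cls (inv\<^bsub>H\<^esub> (\<sigma> l)) l"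
    using k l by (simp add: baer_emb_mult_baer_map)
  also have "\<dots> = cls (inv\<^bsub>H\<^esub> (\<sigma> h)) h" using h l by (intro cls_inv_sigma_same_fibre) auto
  finally show ?thesis .
qed

lemma sec_of_sym_mult:
  assumes a: "a \<in> carrier A" and b: "b \<in> carrier A"
  shows "sec_of_sym A C H i p \<sigma> a \<otimes>\<^bsub>B\<^esub> sec_of_sym A C H i p \<sigma> b =
    sec_of_sym A C H i p \<sigma> (a \<otimes>\<^bsub>A\<^esub> b) \<otimes>\<^bsub>B\<^esub> baer_emb C H i p (comm_pair C H i p a b)"
proof -
  let ?s = "sec_of_sym A C H i p \<sigma>" and ?e = "comm_pair C H i p a b"
  define h k where "h = lift H p a" and "k = lift H p b"
  have h: "h \<in> carrier H" "p h = a" and k: "k \<in> carrier H" "p k = b"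
    using lift_closed p_lift a b unfolding h_def k_def by auto
  define u v where "u = inv\<^bsub>H\<^esub> (\<sigma> h)" and "v = inv\<^bsub>H\<^esub> (\<sigma> k)"
  have uv: "u \<in> carrier H" "v \<in> carrier H" "p u = a" "p v = b"
    using h k unfolding u_def v_def by (auto simp: p_sigma)
  have e: "?e \<in> carrier C" "i ?e \<otimes>\<^bsub>H\<^esub> (v \<otimes>\<^bsub>H\<^esub> u) = u \<otimes>\<^bsub>H\<^esub> v"
    using comm_pair_closed_mult_swap[OF uv(1,2)] uv by auto
  have "?s a \<otimes>\<^bsub>B\<^esub> ?s b = cls (u \<otimes>\<^bsub>H\<^esub> v) (h \<otimes>\<^bsub>H\<^esub> k)"
    using sec_of_sym_apply[OF h(1)] sec_of_sym_apply[OF k(1)] uv h k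
    by (simp add: cls_mult flip: u_def v_def)
  also have "u \<otimes>\<^bsub>H\<^esub> v = (v \<otimes>\<^bsub>H\<^esub> u) \<otimes>\<^bsub>H\<^esub> i ?e"
    using e uv central[of ?e "v \<otimes>\<^bsub>H\<^esub> u"] by (metis H.m_closed)
  also have "cls ((v \<otimes>\<^bsub>H\<^esub> u) \<otimes>\<^bsub>H\<^esub> i ?e) (h \<otimes>\<^bsub>H\<^esub> k) =
      cls (v \<otimes>\<^bsub>H\<^esub> u) (h \<otimes>\<^bsub>H\<^esub> k) \<otimes>\<^bsub>B\<^esub> baer_emb C H i p ?e"
    unfolding baer_emb_def using e uv h k A.m_comm[of b a] by (subst cls_mult) (auto simp: p_i)
  also have "v \<otimes>\<^bsub>H\<^esub> u = inv\<^bsub>H\<^esub> (\<sigma> (h \<otimes>\<^bsub>H\<^esub> k))"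
    unfolding u_def v_def using h k by (simp add: H.inv_mult_group)
  also have "cls (inv\<^bsub>H\<^esub> (\<sigma> (h \<otimes>\<^bsub>H\<^esub> k))) (h \<otimes>\<^bsub>H\<^esub> k) = ?s (a \<otimes>\<^bsub>A\<^esub> b)"
    using sec_of_sym_apply[of "h \<otimes>\<^bsub>H\<^esub> k"] h k by simp
  finally show ?thesis .
qed

lemma sec_of_sym_good: "good_section A C H i p (sec_of_sym A C H i p \<sigma>)"
proof -
  have "sec_of_sym A C H i p \<sigma> a \<in> carrier B \<and> baer_proj p (sec_of_sym A C H i p \<sigma> a) = a"
    if a: "a \<in> carrier A" for a
  proof -
    define l where "l = lift H p a"
    have l: "l \<in> carrier H" "p l = a" using lift_closed p_lift a unfolding l_def by auto
    have "inv\<^bsub>H\<^esub> (\<sigma> l) \<in> carrier H" "p (inv\<^bsub>H\<^esub> (\<sigma> l)) = a"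
      using l a by (simp_all add: p_sigma)
    then show ?thesis
      using sec_of_sym_apply[OF l(1)] l by (simp add: cls_closed baer_proj_cls)
  qed
  then show ?thesis
    unfolding good_section_def using sec_of_sym_mult by (auto simp: sec_of_sym_def)
qed

end

locale pairing_section = central_extension A C H i p
  for A :: "('a, 'x) monoid_scheme" and C :: "('c, 'y) monoid_scheme"
    and H :: "('h, 'z) monoid_scheme" and i :: "'c \<Rightarrow> 'h" and p :: "'h \<Rightarrow> 'a" +
  fixes s :: "'a \<Rightarrow> ('h \<times> 'h) set"
  assumes good_section: "good_section A C H i p s"
begin

lemma s_extensional: "s \<in> extensional (carrier A)"
  and s_closed: "a \<in> carrier A \<Longrightarrow> s a \<in> carrier B"
  and baer_proj_s: "a \<in> carrier A \<Longrightarrow> baer_proj p (s a) = a"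
  and s_mult: "a \<in> carrier A \<Longrightarrow> b \<in> carrier A \<Longrightarrow>
    s a \<otimes>\<^bsub>B\<^esub> s b = s (a \<otimes>\<^bsub>A\<^esub> b) \<otimes>\<^bsub>B\<^esub> baer_emb C H i p (comm_pair C H i p a b)"
  using good_section unfolding good_section_def by auto

abbreviation partner :: "'h \<Rightarrow> 'h" where "partner \<equiv> sec_partner C H i p s"

lemma partner_closed: "h \<in> carrier H \<Longrightarrow> partner h \<in> carrier H"
  and p_partner: "h \<in> carrier H \<Longrightarrow> p (partner h) = p h"
  and s_p_eq_cls_partner: "h \<in> carrier H \<Longrightarrow> s (p h) = cls (partner h) h"
  using theI'[OF baer_sq_fibre_repr[OF s_closed _ baer_proj_s]] unfolding sec_partner_def by auto

lemma partner_unique: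
  assumes "h \<in> carrier H" "u \<in> carrier H" "p u = p h" "s (p h) = cls u h"
  shows "partner h = u"
  using assms partner_closed p_partner s_p_eq_cls_partner by (intro cls_left_inj[of _ _ h]) auto

lemma partner_mult:
  assumes h: "h \<in> carrier H" and k: "k \<in> carrier H"
  shows "partner (h \<otimes>\<^bsub>H\<^esub> k) = partner k \<otimes>\<^bsub>H\<^esub> partner h"
proof -
  let ?e = "comm_pair C H i p (p h) (p k)" and ?hk = "h \<otimes>\<^bsub>H\<^esub> k"
  have closed: "partner h \<in> carrier H" "partner k \<in> carrier H" "partner ?hk \<in> carrier H"
    using h k by (simp_all add: partner_closed)
  have e: "?e \<in> carrier C" "i ?e \<otimes>\<^bsub>H\<^esub> (partner k \<otimes>\<^bsub>H\<^esub> partner h) = partner h \<otimes>\<^bsub>H\<^esub> partner k"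
    using comm_pair_closed_mult_swap[OF closed(1,2)] h k by (simp_all add: p_partner)
  have "cls (partner h \<otimes>\<^bsub>H\<^esub> partner k) ?hk = s (p h) \<otimes>\<^bsub>B\<^esub> s (p k)"
    using closed h k by (simp add: cls_mult p_partner s_p_eq_cls_partner)
  also have "\<dots> = s (p ?hk) \<otimes>\<^bsub>B\<^esub> baer_emb C H i p ?e"
    using s_mult[of "p h" "p k"] h k by simp
  also have "\<dots> = cls (partner ?hk \<otimes>\<^bsub>H\<^esub> i ?e) ?hk"
    unfolding s_p_eq_cls_partner[OF H.m_closed[OF h k]] baer_emb_def
    using closed e h k by (subst cls_mult) (auto simp: p_i p_partner)
  finally have "partner ?hk \<otimes>\<^bsub>H\<^esub> i ?e = partner h \<otimes>\<^bsub>H\<^esub> partner k"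
    using closed e h k by (intro cls_left_inj[of _ _ ?hk]) (auto simp: p_i p_partner)
  also have "\<dots> = (partner k \<otimes>\<^bsub>H\<^esub> partner h) \<otimes>\<^bsub>H\<^esub> i ?e"
    using e closed central[of ?e "partner k \<otimes>\<^bsub>H\<^esub> partner h"] by simp
  finally show ?thesis using closed e by (simp del: i.hom_mult)
qed

lemma partner_one: "partner \<one>\<^bsub>H\<^esub> = \<one>\<^bsub>H\<^esub>"
  using partner_mult[of "\<one>\<^bsub>H\<^esub>" "\<one>\<^bsub>H\<^esub>"] partner_closed[of "\<one>\<^bsub>H\<^esub>"] by simp

lemma partner_inv:
  assumes h: "h \<in> carrier H"
  shows "partner (inv\<^bsub>H\<^esub> h) = inv\<^bsub>H\<^esub> (partner h)"
proof -
  have "partner (inv\<^bsub>H\<^esub> h) \<otimes>\<^bsub>H\<^esub> partner h = \<one>\<^bsub>H\<^esub>"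
    using partner_mult[OF h H.inv_closed[OF h]] partner_one h by simp
  then show ?thesis using h partner_closed by (metis H.inv_closed H.inv_equality)
qed

lemma partner_partner:
  assumes h: "h \<in> carrier H"
  shows "partner (partner h) = h"
proof (rule partner_unique)
  show "s (p (partner h)) = cls h (partner h)"
    using h partner_closed p_partner s_p_eq_cls_partner cls_swap by simp
qed (use h partner_closed p_partner in auto)

lemma partner_i:
  assumes c: "c \<in> carrier C"
  shows "partner (i c) = inv\<^bsub>H\<^esub> (i c)"
proof (rule partner_unique)
  have "s (p (i c)) = cls \<one>\<^bsub>H\<^esub> \<one>\<^bsub>H\<^esub>"
    using c s_p_eq_cls_partner[of "\<one>\<^bsub>H\<^esub>"] by (simp add: p_i partner_one)
  also have "\<dots> = cls (i (inv\<^bsub>C\<^esub> c) \<otimes>\<^bsub>H\<^esub> \<one>\<^bsub>H\<^esub>) (inv\<^bsub>H\<^esub> (i (inv\<^bsub>C\<^esub> c)) \<otimes>\<^bsub>H\<^esub> \<one>\<^bsub>H\<^esub>)"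
    using c by (intro cls_central_shift[symmetric]) auto
  finally show "s (p (i c)) = cls (inv\<^bsub>H\<^esub> (i c)) (i c)" using c by simp
qed (use c in \<open>auto simp: p_i\<close>)

lemma sym_struct_sym_of_sec: "sym_struct A C H i p (sym_of_sec C H i p s)"
proof -
  let ?\<sigma> = "sym_of_sec C H i p s"
  have closed: "?\<sigma> h \<in> carrier H" if "h \<in> carrier H" for h
    using that partner_closed by (simp add: sym_of_sec_def)
  have involution: "?\<sigma> (?\<sigma> h) = h" if "h \<in> carrier H" for h
    using that closed partner_closed partner_inv partner_partner by (simp add: sym_of_sec_def)
  have "?\<sigma> \<in> hom H H"
    unfolding hom_def using closed partner_mult partner_closed
    by (auto simp: sym_of_sec_def H.inv_mult_group)
  moreover have "bij_betw ?\<sigma> (carrier H) (carrier H)"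
    by (rule bij_betw_byWitness[of _ ?\<sigma>]) (use involution closed in auto)
  moreover have "?\<sigma> (i c) = i c" if "c \<in> carrier C" for c
    using that partner_i by (simp add: sym_of_sec_def)
  moreover have "p (?\<sigma> h) = inv\<^bsub>A\<^esub> p h" if "h \<in> carrier H" for h
    using that partner_closed p_partner by (simp add: sym_of_sec_def)
  ultimately show ?thesis
    unfolding sym_struct_def using involution by (auto simp: sym_of_sec_def)
qed

lemma sec_of_sym_of_sec: "sec_of_sym A C H i p (sym_of_sec C H i p s) = s"
proof -
  interpret symmetric_structure A C H i p "sym_of_sec C H i p s"
    by unfold_locales (rule sym_struct_sym_of_sec)
  show ?thesis
  proof (rule extensionalityI[OF _ s_extensional])
    fix a assume a: "a \<in> carrier A"
    then obtain h where h: "h \<in> carrier H" "p h = a" using lift_closed p_lift by blast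
    show "sec_of_sym A C H i p (sym_of_sec C H i p s) a = s a"
      using sec_of_sym_apply[OF h(1)] s_p_eq_cls_partner[OF h(1)] h partner_closed
      by (simp add: sym_of_sec_def)
  qed (simp add: sec_of_sym_def)
qed

end

lemma (in symmetric_structure) sym_of_sec_of_sym: "sym_of_sec C H i p (sec_of_sym A C H i p \<sigma>) = \<sigma>"
proof -
  interpret pairing_section A C H i p "sec_of_sym A C H i p \<sigma>"
    by unfold_locales (rule sec_of_sym_good)
  show ?thesis
  proof (rule extensionalityI[OF _ sigma_extensional])
    fix h assume h: "h \<in> carrier H"
    have "partner h = inv\<^bsub>H\<^esub> (\<sigma> h)"
      using h sec_of_sym_apply[OF h] by (intro partner_unique) (auto simp: p_sigma)
    then show "sym_of_sec C H i p (sec_of_sym A C H i p \<sigma>) h = \<sigma> h"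
      using h by (simp add: sym_of_sec_def)
  qed (simp add: sym_of_sec_def)
qed

theorem lemma1p2:
  fixes A :: "('a, 'x) monoid_scheme" and C :: "('c, 'y) monoid_scheme"
    and H :: "('h, 'z) monoid_scheme" and i :: "'c \<Rightarrow> 'h" and p :: "'h \<Rightarrow> 'a"
  assumes "central_ext A C H i p"
  shows "bij_betw (sec_of_sym A C H i p)
           {\<sigma>. sym_struct A C H i p \<sigma>} {s. good_section A C H i p s}"
proof (rule bij_betw_byWitness[where f' = "sym_of_sec C H i p"])
  have sym: "symmetric_structure A C H i p \<sigma>" if "sym_struct A C H i p \<sigma>" for \<sigma>
    using assms that by (simp add: symmetric_structure_def symmetric_structure_axioms_def
        central_extension_def)
  have good: "pairing_section A C H i p s" if "good_section A C H i p s" for s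
    using assms that by (simp add: pairing_section_def pairing_section_axioms_def
        central_extension_def)
  show "\<forall>\<sigma>\<in>{\<sigma>. sym_struct A C H i p \<sigma>}. sym_of_sec C H i p (sec_of_sym A C H i p \<sigma>) = \<sigma>"
    using symmetric_structure.sym_of_sec_of_sym sym by blast
  show "\<forall>s\<in>{s. good_section A C H i p s}. sec_of_sym A C H i p (sym_of_sec C H i p s) = s"
    using pairing_section.sec_of_sym_of_sec good by blast
  show "sec_of_sym A C H i p ` {\<sigma>. sym_struct A C H i p \<sigma>} \<subseteq> {s. good_section A C H i p s}"
    using symmetric_structure.sec_of_sym_good sym by blast
  show "sym_of_sec C H i p ` {s. good_section A C H i p s} \<subseteq> {\<sigma>. sym_struct A C H i p \<sigma>}"
    using pairing_section.sym_struct_sym_of_sec good by blast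
qed

end
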